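(* Let $u$ be a coherent utility on $L^0$ with determining set $\mathcal{D}$, $\rho=-u$, and let $Y^1,\dots,Y^M$ be independent random variables (or random vectors); write $Y=(Y^1,\dots,Y^M)$. Let $X=\sum_{m=1}^MX^m$, where each $X^m$ is $\sigma(Y^m)$-measurable, $X^m\in L^1_s(\mathcal{D})\cap L^1_s(\mathsf{E}(\mathcal{D}\mid Y))\cap L^1$, and $\mathsf{E}X^m=0$. Then $$\rho^f(X;Y^1,\dots,Y^M)\le\sum_{m=1}^M\rho^f(X;Y^m).$$
   Context: Let $(\Omega,\mathcal{F},\mathsf{P})$ be a probability space, $L^0$ the space of all real random variables, $L^1=L^1(\mathsf{P})$, and $\mathcal{P}$ the set of probability measures on $\mathcal{F}$ absolutely continuous with respect to $\mathsf{P}$; measures $\mathsf{Q}\in\mathcal{P}$ are identified with their densities. For $\mathsf{Q}\in\mathcal{P}$ and $X\in L^0$, $\mathsf{E}_\mathsf{Q}X:=\mathsf{E}_\mathsf{Q}X^+-\mathsf{E}_\mathsf{Q}X^-$ with the convention $\infty-\infty=-\infty$; $\mathsf{E}$ is expectation under $\mathsf{P}$. A coherent utility on $L^0$ is a map $u:L^0\to[-\infty,\infty]$ of the form $u(X)=\inf_{\mathsf{Q}\in\mathcal{D}}\mathsf{E}_\mathsf{Q}X$ for a nonempty $\mathcal{D}\subseteq\mathcal{P}$; its determining set is the largest such set, $\{\mathsf{Q}\in\mathcal{P}:\mathsf{E}_\mathsf{Q}X\ge u(X)\ \forall X\in L^0\}$. For $\mathcal{C}\subseteq\mathcal{P}$,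 $L^1_s(\mathcal{C})=\{X\in L^0:\lim_{n\to\infty}\sup_{\mathsf{Q}\in\mathcal{C}}\mathsf{E}_\mathsf{Q}|X|I(|X|>n)=0\}$. For a random vector $V$, $\mathsf{E}(\mathcal{D}\mid V):=\{\mathsf{E}(Z\mid V):Z\in\mathcal{D}\}$, the factor utility is $u^f(X;V):=\inf_{\mathsf{Q}\in\mathsf{E}(\mathcal{D}\mid V)}\mathsf{E}_\mathsf{Q}X$, and the factor risk is $\rho^f(X;V):=-u^f(X;V)$; $\rho^f(X;Y^1,\dots,Y^M)$ means $\rho^f(X;(Y^1,\dots,Y^M))$. *)

theory Defs
  imports "HOL-Probability.Probability"
begin

text \<open>Measures Q absolutely continuous w.r.t. P, identified with their densities Z = dQ/dP.\<close>
definition densities :: "'a measure \<Rightarrow> ('a \<Rightarrow> real) set" where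
  "densities M = {Z. Z \<in> borel_measurable M \<and> (AE x in M. 0 \<le> Z x)
                    \<and> (\<integral>\<^sup>+ x. ennreal (Z x) \<partial>M) = 1}"

text \<open>E_Q X = E_Q X^+ - E_Q X^- with the convention \<infinity> - \<infinity> = -\<infinity>.\<close>
definition EQ :: "'a measure \<Rightarrow> ('a \<Rightarrow> real) \<Rightarrow> ('a \<Rightarrow> real) \<Rightarrow> ereal" where
  "EQ M Z X =
     (let a = enn2ereal (\<integral>\<^sup>+ x. ennreal (Z x * max (X x) 0) \<partial>M);
          b = enn2ereal (\<integral>\<^sup>+ x. ennreal (Z x * max (- X x) 0) \<partial>M)
      in if b = \<infinity> then - \<infinity> else a - b)"

definition coherent_utility :: "'a measure \<Rightarrow> (('a \<Rightarrow> real) \<Rightarrow> ereal) \<Rightarrow> bool" where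
  "coherent_utility M u \<longleftrightarrow>
     (\<exists>D. D \<noteq> {} \<and> D \<subseteq> densities M \<and>
          (\<forall>X \<in> borel_measurable M. u X = (INF Z\<in>D. EQ M Z X)))"

text \<open>Determining set: the largest such set.\<close>
definition determining_set :: "'a measure \<Rightarrow> (('a \<Rightarrow> real) \<Rightarrow> ereal) \<Rightarrow> ('a \<Rightarrow> real) set" where
  "determining_set M u = {Z \<in> densities M. \<forall>X \<in> borel_measurable M. u X \<le> EQ M Z X}"

definition L1s :: "'a measure \<Rightarrow> ('a \<Rightarrow> real) set \<Rightarrow> ('a \<Rightarrow> real) set" where
  "L1s M C = {X \<in> borel_measurable M.
     (\<lambda>n::nat. SUP Z\<in>C. \<integral>\<^sup>+ x. ennreal (Z x * \<bar>X x\<bar>) * indicator {y. \<bar>X y\<bar> > real n} x \<partial>M)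
       \<longlonglongrightarrow> 0}"

definition cond_set :: "'a measure \<Rightarrow> ('a \<Rightarrow> real) set \<Rightarrow> 'a measure \<Rightarrow> ('a \<Rightarrow> real) set" where
  "cond_set M D F = (\<lambda>Z. real_cond_exp M F Z) ` D"

definition sigma_gen :: "'a measure \<Rightarrow> ('a \<Rightarrow> 'b) \<Rightarrow> 'b measure \<Rightarrow> 'a measure" where
  "sigma_gen M V N = vimage_algebra (space M) V N"

definition factor_utility :: "'a measure \<Rightarrow> ('a \<Rightarrow> real) set \<Rightarrow> ('a \<Rightarrow> real) \<Rightarrow> ('a \<Rightarrow> 'b) \<Rightarrow> 'b measure \<Rightarrow> ereal" where
  "factor_utility M D X V N = (INF Z \<in> cond_set M D (sigma_gen M V N). EQ M Z X)"

definition factor_risk :: "'a measure \<Rightarrow> ('a \<Rightarrow> real) set \<Rightarrow> ('a \<Rightarrow> real) \<Rightarrow> ('a \<Rightarrow> 'b) \<Rightarrow> 'b measure \<Rightarrow> ereal" where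
  "factor_risk M D X V N = - factor_utility M D X V N"

definition joint_vec :: "nat \<Rightarrow> (nat \<Rightarrow> 'a \<Rightarrow> 'b) \<Rightarrow> 'a \<Rightarrow> (nat \<Rightarrow> 'b)" where
  "joint_vec n Y = (\<lambda>\<omega>. \<lambda>m\<in>{1..n}. Y m \<omega>)"

end

theory Submission
  imports Defs
begin

text \<open>Write \<open>g\<^sub>m(Z) = E[X\<^sup>m Z]\<close> for \<open>Z \<in> D\<close>. Every \<open>X\<^sup>m\<close> is \<open>\<sigma>(Y)\<close>-measurable,
  so the density \<open>E(Z | Y)\<close> gives \<open>X\<close> the expectation \<open>\<Sum>\<^sub>m g\<^sub>m(Z)\<close>. The density
  \<open>E(Z | Y\<^sup>m)\<close> is \<open>\<sigma>(Y\<^sup>m)\<close>-measurable, hence independent of every \<open>X\<^sup>k\<close> with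
  \<open>k \<noteq> m\<close>; as these are centred, it gives \<open>X\<close> the expectation \<open>g\<^sub>m(Z)\<close>. The claim is
  then the subadditivity of the supremum over \<open>Z \<in> D\<close> of \<open>-\<Sum>\<^sub>m g\<^sub>m(Z)\<close>.\<close>

lemma space_sigma_gen [simp]: "space (sigma_gen M V N) = space M"
  by (simp add: sigma_gen_def)

lemma sets_sigma_gen:
  "V \<in> space M \<rightarrow> space N \<Longrightarrow> sets (sigma_gen M V N) = {V -` A \<inter> space M | A. A \<in> sets N}"
  unfolding sigma_gen_def by (rule sets_vimage_algebra2)

lemma subalgebra_sigma_gen:
  assumes "V \<in> measurable M N"
  shows "subalgebra M (sigma_gen M V N)"
  using assms unfolding subalgebra_def sigma_gen_def measurable_iff_sets by simp

lemma sigma_finite_subalgebra_sigma_gen: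
  assumes "finite_measure M" "V \<in> measurable M N"
  shows "sigma_finite_subalgebra M (sigma_gen M V N)"
proof (rule finite_measure_subalgebra_is_sigma_finite)
  show "finite_measure_subalgebra M (sigma_gen M V N)"
    using assms subalgebra_sigma_gen
    by (simp add: finite_measure_subalgebra_def finite_measure_subalgebra_axioms_def)
qed

lemma sets_sigma_gen_compose_subset:
  assumes "V \<in> space M \<rightarrow> space N" "f \<in> measurable N K"
    and "\<And>x. x \<in> space M \<Longrightarrow> W x = f (V x)"
  shows "sets (sigma_gen M W K) \<subseteq> sets (sigma_gen M V N)"
proof -
  have "sigma_gen M W K = vimage_algebra (space M) V (vimage_algebra (space N) f K)"
    unfolding sigma_gen_def using assms
    by (subst vimage_algebra_vimage_algebra_eq) (auto simp: measurable_def intro: vimage_algebra_cong)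
  also have "sets \<dots> \<subseteq> sets (sigma_gen M V N)"
    unfolding sigma_gen_def using assms(2) by (intro mono_vimage_algebra) (simp add: measurable_iff_sets)
  finally show ?thesis .
qed

lemma measurable_joint_vec:
  assumes "\<And>j. j \<in> {1..n} \<Longrightarrow> Y j \<in> measurable M N"
  shows "joint_vec n Y \<in> measurable M (PiM {1..n} (\<lambda>_. N))"
  unfolding joint_vec_def using assms by (rule measurable_restrict)

lemma subalgebra_sigma_gen_joint_vec:
  assumes "i \<in> {1..n}" "\<And>j. j \<in> {1..n} \<Longrightarrow> Y j \<in> measurable M N"
  shows "subalgebra (sigma_gen M (joint_vec n Y) (PiM {1..n} (\<lambda>_. N))) (sigma_gen M (Y i) N)"
proof -
  have "Y i x = joint_vec n Y x i" for x
    using assms(1) by (simp add: joint_vec_def)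
  moreover have "(\<lambda>x. x i) \<in> measurable (PiM {1..n} (\<lambda>_. N)) N"
    using assms(1) by (rule measurable_component_singleton)
  ultimately have "sets (sigma_gen M (Y i) N) \<subseteq> sets (sigma_gen M (joint_vec n Y) (PiM {1..n} (\<lambda>_. N)))"
    using measurable_joint_vec[OF assms(2)]
    by (intro sets_sigma_gen_compose_subset) (auto simp: measurable_def)
  then show ?thesis
    by (simp add: subalgebra_def)
qed

lemma densitiesD:
  assumes "Z \<in> densities M"
  shows "Z \<in> borel_measurable M" "AE x in M. 0 \<le> Z x" "integrable M Z"
proof -
  show Z: "Z \<in> borel_measurable M" "AE x in M. 0 \<le> Z x"
    using assms by (auto simp: densities_def)
  have "(\<integral>\<^sup>+ x. ennreal (Z x) \<partial>M) = ennreal 1"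
    using assms by (simp add: densities_def)
  then show "integrable M Z"
    using Z by (intro integrableI_nn_integral_finite)
qed

lemma EQ_eq_integral:
  assumes "AE x in M. 0 \<le> W x" "integrable M (\<lambda>x. W x * X x)"
  shows "EQ M W X = ereal (\<integral>x. W x * X x \<partial>M)"
proof -
  have pos: "(\<integral>\<^sup>+ x. ennreal (W x * max (X x) 0) \<partial>M) = (\<integral>\<^sup>+ x. ennreal (W x * X x) \<partial>M)"
    and neg: "(\<integral>\<^sup>+ x. ennreal (W x * max (- X x) 0) \<partial>M) = (\<integral>\<^sup>+ x. ennreal (- (W x * X x)) \<partial>M)"
    using assms(1) by (auto intro!: nn_integral_cong_AE elim!: eventually_mono
        simp: max_def ennreal_neg mult_nonneg_nonpos)
  have "(\<integral>\<^sup>+ x. ennreal (W x * X x) \<partial>M) < \<infinity>" "(\<integral>\<^sup>+ x. ennreal (- (W x * X x)) \<partial>M) < \<infinity>"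
    using assms(2) by (simp_all add: real_integrable_def less_top)
  then show ?thesis
    unfolding EQ_def Let_def pos neg real_lebesgue_integral_def[OF assms(2)]
    by (auto simp: less_top_ennreal enn2ereal_ennreal)
qed

lemma EQ_sum_eq_sum_integral:
  assumes "finite I" "AE x in M. 0 \<le> W x" "\<And>k. k \<in> I \<Longrightarrow> integrable M (\<lambda>x. X k x * W x)"
  shows "EQ M W (\<lambda>x. \<Sum>k\<in>I. X k x) = ereal (\<Sum>k\<in>I. \<integral>x. X k x * W x \<partial>M)"
proof -
  have sum: "(\<lambda>x. W x * (\<Sum>k\<in>I. X k x)) = (\<lambda>x. \<Sum>k\<in>I. X k x * W x)"
    by (simp add: sum_distrib_left mult.commute)
  show ?thesis
    using assms by (subst EQ_eq_integral) (auto simp: sum)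
qed

lemma L1s_integrable_mult:
  assumes X: "X \<in> L1s M D" and "Z \<in> D" and "D \<subseteq> densities M"
  shows "integrable M (\<lambda>x. X x * Z x)"
proof -
  have [measurable]: "Z \<in> borel_measurable M" and Z_nonneg: "AE x in M. 0 \<le> Z x"
    and Z_mass: "(\<integral>\<^sup>+ x. ennreal (Z x) \<partial>M) = 1"
    using assms(2,3) by (auto simp: densities_def)
  have [measurable]: "X \<in> borel_measurable M"
    using X by (simp add: L1s_def)
  define tail where "tail W n = (\<integral>\<^sup>+ x. ennreal (W x * \<bar>X x\<bar>) * indicator {y. \<bar>X y\<bar> > real n} x \<partial>M)"
    for W :: "'a \<Rightarrow> real" and n :: nat
  have "(\<lambda>n. SUP W\<in>D. tail W n) \<longlonglongrightarrow> 0"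
    using X by (simp add: L1s_def tail_def)
  then have "eventually (\<lambda>n. (SUP W\<in>D. tail W n) < 1) sequentially"
    by (rule order_tendstoD(2)) simp
  then obtain n where "(SUP W\<in>D. tail W n) < 1"
    by (auto simp: eventually_sequentially)
  then have "tail Z n < 1"
    using SUP_upper[OF assms(2)] by (rule le_less_trans[rotated])
  then have tail_finite: "tail Z n < \<infinity>"
    by (rule order.strict_trans) simp
  have "(\<integral>\<^sup>+ x. ennreal (norm (X x * Z x)) \<partial>M)
      \<le> (\<integral>\<^sup>+ x. ennreal (Z x * \<bar>X x\<bar>) * indicator {y. \<bar>X y\<bar> > real n} x
            + ennreal (real n) * ennreal (Z x) \<partial>M)"
    using Z_nonneg
  proof (intro nn_integral_mono_AE, eventually_elim)
    case (elim x)
    show ?case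
    proof (cases "\<bar>X x\<bar> > real n")
      case True
      then show ?thesis using elim by (simp add: abs_mult mult.commute)
    next
      case False
      then have "Z x * \<bar>X x\<bar> \<le> real n * Z x"
        using elim by (metis mult.commute mult_left_mono not_less)
      then show ?thesis
        using False elim by (simp add: abs_mult mult.commute ennreal_mult[symmetric] ennreal_leI)
    qed
  qed
  also have "\<dots> = tail Z n + ennreal (real n) * (\<integral>\<^sup>+ x. ennreal (Z x) \<partial>M)"
    unfolding tail_def by (simp add: nn_integral_add nn_integral_cmult)
  also have "\<dots> < \<infinity>"
    using tail_finite by (simp add: Z_mass)
  finally show ?thesis
    by (intro integrableI_bounded) auto
qed

lemma (in prob_space) indep_vars_sigma_gen:
  assumes "indep_vars N Y I" "J \<subseteq> I"
    and "\<And>i. i \<in> J \<Longrightarrow> X i \<in> measurable (sigma_gen M (Y i) (N i)) (K i)"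
  shows "indep_vars K X J"
proof -
  have Y: "Y i \<in> measurable M (N i)" if "i \<in> I" for i
    using assms(1) that by (simp add: indep_vars_def)
  have "indep_sets (\<lambda>i. {Y i -` A \<inter> space M | A. A \<in> sets (N i)}) I"
    using assms(1) by (simp add: indep_vars_def2)
  then have "indep_sets (\<lambda>i. {X i -` A \<inter> space M | A. A \<in> sets (K i)}) J"
  proof (rule indep_sets_mono)
    show "J \<subseteq> I" by fact
    fix i assume "i \<in> J"
    then show "{X i -` A \<inter> space M | A. A \<in> sets (K i)} \<subseteq> {Y i -` A \<inter> space M | A. A \<in> sets (N i)}"
      using measurable_sets[OF assms(3)] sets_sigma_gen[of "Y i" M "N i"] Y assms(2)
      by (force simp: measurable_def)
  qed
  moreover have "random_variable (K i) (X i)" if "i \<in> J" for i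
    using that assms(2) by (intro measurable_from_subalg[OF subalgebra_sigma_gen[OF Y] assms(3)]) auto
  ultimately show ?thesis
    by (simp add: indep_vars_def2)
qed

lemma (in prob_space)
  assumes "indep_vars N Y I" "i \<in> I" "j \<in> I" "i \<noteq> j"
    and "f \<in> borel_measurable (sigma_gen M (Y i) (N i))" "g \<in> borel_measurable (sigma_gen M (Y j) (N j))"
    and "integrable M f" "integrable M g"
  shows integrable_mult_indep_sigma_gen: "integrable M (\<lambda>x. f x * g x :: real)"
    and integral_mult_indep_sigma_gen: "(\<integral>x. f x * g x \<partial>M) = (\<integral>x. f x \<partial>M) * (\<integral>x. g x \<partial>M)"
proof -
  define h where "h k = (if k = i then f else g)" for k
  have "indep_vars (\<lambda>_. borel) h {i, j}"
    using assms(1-6) by (intro indep_vars_sigma_gen[OF assms(1)]) (auto simp: h_def)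
  moreover have "integrable M (h k)" if "k \<in> {i, j}" for k
    using assms(7,8) by (simp add: h_def)
  moreover have "(\<lambda>x. \<Prod>k\<in>{i, j}. h k x) = (\<lambda>x. f x * g x)"
    using assms(4) by (simp add: h_def)
  ultimately show "integrable M (\<lambda>x. f x * g x)" "(\<integral>x. f x * g x \<partial>M) = (\<integral>x. f x \<partial>M) * (\<integral>x. g x \<partial>M)"
    using indep_vars_lebesgue_integral[of "{i, j}" h] indep_vars_integrable[of "{i, j}" h] assms(4)
    by (simp_all add: h_def)
qed

lemma EQ_real_cond_exp_sum:
  assumes "sigma_finite_subalgebra M F" "finite I" "Z \<in> densities M"
    and "\<And>k. k \<in> I \<Longrightarrow> X k \<in> borel_measurable F"
    and "\<And>k. k \<in> I \<Longrightarrow> integrable M (\<lambda>x. X k x * Z x)"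
  shows "EQ M (real_cond_exp M F Z) (\<lambda>x. \<Sum>k\<in>I. X k x) = ereal (\<Sum>k\<in>I. \<integral>x. X k x * Z x \<partial>M)"
proof -
  interpret sigma_finite_subalgebra M F by fact
  note Z = densitiesD[OF assms(3)]
  have "integrable M (\<lambda>x. X k x * real_cond_exp M F Z x)"
    "(\<integral>x. X k x * real_cond_exp M F Z x \<partial>M) = (\<integral>x. X k x * Z x \<partial>M)" if "k \<in> I" for k
    using real_cond_exp_intg[OF assms(5) assms(4) Z(1)] that by auto
  moreover have "AE x in M. 0 \<le> real_cond_exp M F Z x"
    using Z by (intro real_cond_exp_pos)
  ultimately show ?thesis
    using assms(2) by (simp add: EQ_sum_eq_sum_integral)
qed

lemma (in prob_space) EQ_real_cond_exp_indep_sum: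
  assumes "finite I" "indep_vars N Y I" "m \<in> I" "Z \<in> densities M"
    and "\<And>k. k \<in> I \<Longrightarrow> X k \<in> borel_measurable (sigma_gen M (Y k) (N k))"
    and "\<And>k. k \<in> I \<Longrightarrow> integrable M (X k)" "\<And>k. k \<in> I \<Longrightarrow> (\<integral>x. X k x \<partial>M) = 0"
    and "integrable M (\<lambda>x. X m x * Z x)"
  shows "EQ M (real_cond_exp M (sigma_gen M (Y m) (N m)) Z) (\<lambda>x. \<Sum>k\<in>I. X k x)
      = ereal (\<integral>x. X m x * Z x \<partial>M)"
proof -
  define F where "F = sigma_gen M (Y m) (N m)"
  define W where "W = real_cond_exp M F Z"
  note Z = densitiesD[OF assms(4)]
  have "Y m \<in> measurable M (N m)"
    using assms(2,3) by (simp add: indep_vars_def)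
  then interpret sigma_finite_subalgebra M F
    unfolding F_def by (intro sigma_finite_subalgebra_sigma_gen finite_measure_axioms)
  have W: "W \<in> borel_measurable F" "integrable M W"
    unfolding W_def using Z by auto
  have W_nonneg: "AE x in M. 0 \<le> W x"
    unfolding W_def using Z by (intro real_cond_exp_pos)
  have "integrable M (\<lambda>x. X k x * W x) \<and>
      (\<integral>x. X k x * W x \<partial>M) = (if k = m then \<integral>x. X m x * Z x \<partial>M else 0)" if "k \<in> I" for k
  proof (cases "k = m")
    case True
    then show ?thesis
      using real_cond_exp_intg[OF assms(8) assms(5)[OF assms(3), folded F_def] Z(1)]
      by (simp add: W_def)
  next
    case False
    note indep = assms(2) that assms(3) False assms(5)[OF that] W(1)[unfolded F_def]
    show ?thesis
      using integrable_mult_indep_sigma_gen[OF indep] integral_mult_indep_sigma_gen[OF indep]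
        assms(6,7) that W(2) False by simp
  qed
  then have "EQ M W (\<lambda>x. \<Sum>k\<in>I. X k x) = ereal (\<Sum>k\<in>I. if k = m then \<integral>x. X m x * Z x \<partial>M else 0)"
    using assms(1) W_nonneg by (simp add: EQ_sum_eq_sum_integral)
  then show ?thesis
    using assms(1,3) by (simp add: W_def F_def)
qed

lemma uminus_INF_sum_le_sum_uminus_INF:
  fixes f :: "'i \<Rightarrow> 'z \<Rightarrow> real"
  shows "- (INF z\<in>Z. ereal (\<Sum>i\<in>I. f i z)) \<le> (\<Sum>i\<in>I. - (INF z\<in>Z. ereal (f i z)))"
proof -
  have "- (\<Sum>i\<in>I. - (INF z\<in>Z. ereal (f i z))) \<le> ereal (\<Sum>i\<in>I. f i z)" if "z \<in> Z" for z
  proof -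
    have "- ereal (f i z) \<le> - (INF z\<in>Z. ereal (f i z))" for i
      using INF_lower[OF that, of "\<lambda>z. ereal (f i z)"] by (rule ereal_minus_le_minus[THEN iffD2])
    then have "(\<Sum>i\<in>I. - ereal (f i z)) \<le> (\<Sum>i\<in>I. - (INF z\<in>Z. ereal (f i z)))"
      by (rule sum_mono)
    then show ?thesis
      by (simp add: ereal_uminus_le_reorder sum_negf sum_ereal)
  qed
  then show ?thesis
    by (subst ereal_uminus_le_reorder) (rule INF_greatest)
qed

lemma factor_risk_eq_uminus_INF:
  "factor_risk M D X V N = - (INF Z\<in>D. EQ M (real_cond_exp M (sigma_gen M V N) Z) X)"
  by (simp add: factor_risk_def factor_utility_def cond_set_def image_image)

theorem proposition3p10:
  fixes M :: "'a measure" and u :: "('a \<Rightarrow> real) \<Rightarrow> ereal" and D :: "('a \<Rightarrow> real) set"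
    and n :: nat and Y :: "nat \<Rightarrow> 'a \<Rightarrow> 'b::euclidean_space" and Xs :: "nat \<Rightarrow> 'a \<Rightarrow> real"
    and X :: "'a \<Rightarrow> real"
  assumes "prob_space M"
    and "coherent_utility M u"
    and "D = determining_set M u"
    and "\<And>m. m \<in> {1..n} \<Longrightarrow> Y m \<in> borel_measurable M"
    and "prob_space.indep_vars M (\<lambda>_. borel) Y {1..n}"
    and "X = (\<lambda>\<omega>. \<Sum>m = 1..n. Xs m \<omega>)"
    and "\<And>m. m \<in> {1..n} \<Longrightarrow> Xs m \<in> borel_measurable (sigma_gen M (Y m) borel)"
    and "\<And>m. m \<in> {1..n} \<Longrightarrow> Xs m \<in> L1s M D"
    and "\<And>m. m \<in> {1..n} \<Longrightarrow>
           Xs m \<in> L1s M (cond_set M D (sigma_gen M (joint_vec n Y) (PiM {1..n} (\<lambda>_. borel))))"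
    and "\<And>m. m \<in> {1..n} \<Longrightarrow> integrable M (Xs m)"
    and "\<And>m. m \<in> {1..n} \<Longrightarrow> integral\<^sup>L M (Xs m) = 0"
  shows "factor_risk M D X (joint_vec n Y) (PiM {1..n} (\<lambda>_. borel))
           \<le> (\<Sum>m = 1..n. factor_risk M D X (Y m) borel)"
proof -
  interpret prob_space M by fact
  define G where "G = sigma_gen M (joint_vec n Y) (PiM {1..n} (\<lambda>_. borel :: 'b measure))"
  define g where "g m Z = (\<integral>x. Xs m x * Z x \<partial>M)" for m Z
  have D_densities: "D \<subseteq> densities M"
    using assms(3) by (auto simp: determining_set_def)
  have Xs_Z: "integrable M (\<lambda>x. Xs m x * Z x)" if "m \<in> {1..n}" "Z \<in> D" for m Z
    using L1s_integrable_mult[OF assms(8)[OF that(1)] that(2) D_densities] .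
  have G: "sigma_finite_subalgebra M G"
    unfolding G_def using assms(4)
    by (intro sigma_finite_subalgebra_sigma_gen finite_measure_axioms measurable_joint_vec)
  have Xs_G: "Xs m \<in> borel_measurable G" if "m \<in> {1..n}" for m
    unfolding G_def using subalgebra_sigma_gen_joint_vec[OF that assms(4)] assms(7)[OF that]
    by (rule measurable_from_subalg)
  have "EQ M (real_cond_exp M G Z) X = ereal (\<Sum>m = 1..n. g m Z)" if "Z \<in> D" for Z
    unfolding assms(6) g_def using that D_densities Xs_G Xs_Z
    by (intro EQ_real_cond_exp_sum[OF G]) auto
  then have "factor_risk M D X (joint_vec n Y) (PiM {1..n} (\<lambda>_. borel))
      = - (INF Z\<in>D. ereal (\<Sum>m = 1..n. g m Z))"
    unfolding factor_risk_eq_uminus_INF G_def[symmetric] by (simp cong: INF_cong)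
  also have "\<dots> \<le> (\<Sum>m = 1..n. - (INF Z\<in>D. ereal (g m Z)))"
    by (rule uminus_INF_sum_le_sum_uminus_INF)
  also have "\<dots> = (\<Sum>m = 1..n. factor_risk M D X (Y m) borel)"
  proof (intro sum.cong refl)
    fix m assume m: "m \<in> {1..n}"
    have "EQ M (real_cond_exp M (sigma_gen M (Y m) borel) Z) X = ereal (g m Z)" if "Z \<in> D" for Z
      unfolding assms(6) g_def using m that D_densities
      by (intro EQ_real_cond_exp_indep_sum[OF _ assms(5)] assms(7,10,11) Xs_Z) auto
    then show "- (INF Z\<in>D. ereal (g m Z)) = factor_risk M D X (Y m) borel"
      unfolding factor_risk_eq_uminus_INF by (simp cong: INF_cong)
  qed
  finally show ?thesis .
qed

end
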